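(* Assume the setting described in the context. Let $\pi$ be a permutation of $F$. If $\tau$ is a $\pi$-stable walk with word $W$ and initial state $\sigma_1$, then $R_W\in\mathrm{Ind}(F_{\sigma_1})$.
   Context: Setting: $\Omega$ is a finite set and $F$ a finite set of flaws, each a nonempty subset of $\Omega$; $F_\sigma=\{f:\sigma\in f\}$. For $\sigma\in\Omega$ and $f\in F_\sigma$ there is a probability distribution $\rho(\cdot\mid f,\sigma)$ with support $A(f,\sigma)$. A walk is a sequence $\sigma_1\xrightarrow{w_1}\sigma_2\cdots\xrightarrow{w_t}\sigma_{t+1}$ with $w_i\in F_{\sigma_i}$ and $\sigma_{i+1}\in A(w_i,\sigma_i)$, with word $w_1\ldots w_t$. $\sim$ is a symmetric relation on $F$ (loops allowed), $\Gamma(f)=\{g:f\sim g\}$, $\Gamma^+(f)=\Gamma(f)\cup\{f\}$, $\Gamma^+(S)=\bigcup_{f\in S}\Gamma^+(f)$. It is assumed that for every step $\sigma\xrightarrow{f}\sigma'$, $F_{\sigma'}\subseteq(F_\sigma\setminus\{f\})\cup\Gamma(f)$. $S$ is independent if $f\not\sim g$ for distinct $f,g\in S$; $\mathrm{Ind}(S)$ is the family of independent subsets of $S$. A sequence $(I_1,\ldots,I_s)$, $s\ge1$, is stable if $I_r\in\mathrm{Ind}(F)$ and $I_{r+1}\subseteq\Gamma^+(I_r)$. A word $W$ is stable if $W=W_1\ldots W_s$ with nonempty words $W_r$ of distinct flaws whose flaw sets $I_r$ form a stable sequence. It is $\pi$-stable if additionally each $W_r$ is strictly increasing in the order induced by $\pi$.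 $R_W=I_1$ (and $R_W=\varnothing$ for the empty word). A walk is $\pi$-stable if its word is. *)

theory Defs
  imports "HOL-Probability.Probability_Mass_Function"
begin

text \<open>Flaws are subsets of the state space; states have type 's, flaws type 's set.
  The distribution rho(.|f,sigma) is a pmf; its support A(f,sigma) is set_pmf.\<close>

definition Fsig :: "'s set set \<Rightarrow> 's \<Rightarrow> 's set set" where
  "Fsig F \<sigma> = {f \<in> F. \<sigma> \<in> f}"

definition Gam :: "'s set set \<Rightarrow> ('s set \<Rightarrow> 's set \<Rightarrow> bool) \<Rightarrow> 's set \<Rightarrow> 's set set" where
  "Gam F adj f = {g \<in> F. adj f g}"

definition GamP :: "'s set set \<Rightarrow> ('s set \<Rightarrow> 's set \<Rightarrow> bool) \<Rightarrow> 's set set \<Rightarrow> 's set set" where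
  "GamP F adj S = (\<Union>f\<in>S. Gam F adj f \<union> {f})"

definition indep :: "('s set \<Rightarrow> 's set \<Rightarrow> bool) \<Rightarrow> 's set set \<Rightarrow> bool" where
  "indep adj S = (\<forall>f\<in>S. \<forall>g\<in>S. f \<noteq> g \<longrightarrow> \<not> adj f g)"

definition Ind :: "('s set \<Rightarrow> 's set \<Rightarrow> bool) \<Rightarrow> 's set set \<Rightarrow> 's set set set" where
  "Ind adj S = {I. I \<subseteq> S \<and> indep adj I}"

text \<open>A walk: states ss = [sigma_1,...,sigma_{t+1}], word ws = [w_1,...,w_t].\<close>
definition is_walk :: "'s set set \<Rightarrow> ('s set \<Rightarrow> 's \<Rightarrow> 's pmf) \<Rightarrow> 's list \<Rightarrow> 's set list \<Rightarrow> bool" where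
  "is_walk F rho ss ws \<longleftrightarrow> length ss = Suc (length ws) \<and>
     (\<forall>i < length ws. ws ! i \<in> Fsig F (ss ! i) \<and> ss ! Suc i \<in> set_pmf (rho (ws ! i) (ss ! i)))"

definition stable_seq :: "'s set set \<Rightarrow> ('s set \<Rightarrow> 's set \<Rightarrow> bool) \<Rightarrow> 's set set list \<Rightarrow> bool" where
  "stable_seq F adj Is \<longleftrightarrow> Is \<noteq> [] \<and> (\<forall>r < length Is. Is ! r \<in> Ind adj F) \<and>
     (\<forall>r. Suc r < length Is \<longrightarrow> Is ! Suc r \<subseteq> GamP F adj (Is ! r))"

text \<open>Ws is a decomposition W = W_1 ... W_s witnessing that W is pi-stable; the order
  induced by pi is f < g iff p f < p g.\<close>
definition pi_stable_decomp :: "'s set set \<Rightarrow> ('s set \<Rightarrow> 's set \<Rightarrow> bool) \<Rightarrow> ('s set \<Rightarrow> nat)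
     \<Rightarrow> 's set list \<Rightarrow> 's set list list \<Rightarrow> bool" where
  "pi_stable_decomp F adj p W Ws \<longleftrightarrow> W = concat Ws \<and>
     (\<forall>Wr \<in> set Ws. Wr \<noteq> [] \<and> distinct Wr \<and> sorted_wrt (\<lambda>f g. p f < p g) Wr) \<and>
     stable_seq F adj (map set Ws)"

definition pi_stable_word :: "'s set set \<Rightarrow> ('s set \<Rightarrow> 's set \<Rightarrow> bool) \<Rightarrow> ('s set \<Rightarrow> nat)
     \<Rightarrow> 's set list \<Rightarrow> bool" where
  "pi_stable_word F adj p W \<longleftrightarrow> (\<exists>Ws. pi_stable_decomp F adj p W Ws)"

end

theory Submission
  imports Defs
begin

text \<open>Along a walk, a flaw can only appear in the next state if it is the flaw just
  addressed or one of its neighbours. The first block of a stable word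
  is independent and consists of distinct flaws, so none of its flaws can have been
  introduced by an earlier step of that block; tracing each of them back to the start
  shows that they are all present in the initial state.\<close>

lemma walk_states_in:
  assumes closed: "\<forall>\<sigma>\<in>Omega. \<forall>f\<in>Fsig F \<sigma>. set_pmf (rho f \<sigma>) \<subseteq> Omega"
    and start: "hd ss \<in> Omega"
    and walk: "is_walk F rho ss ws"
    and i: "i \<le> length ws"
  shows "ss ! i \<in> Omega"
  using i
proof (induction i)
  case 0
  with walk start show ?case
    by (cases ss) (auto simp: is_walk_def)
next
  case (Suc i)
  then have "ss ! i \<in> Omega" "i < length ws" by auto
  with walk closed show ?case
    unfolding is_walk_def by blast
qed

lemma walk_flaw_present_earlier:
  assumes intro: "\<forall>\<sigma>\<in>Omega. \<forall>f\<in>Fsig F \<sigma>. \<forall>\<sigma>'\<in>set_pmf (rho f \<sigma>).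
           Fsig F \<sigma>' \<subseteq> (Fsig F \<sigma> - {f}) \<union> Gam F adj f"
    and walk: "is_walk F rho ss ws"
    and states: "\<And>k. k \<le> length ws \<Longrightarrow> ss ! k \<in> Omega"
    and "i \<le> j" and j: "j \<le> length ws"
    and present: "g \<in> Fsig F (ss ! j)"
    and untouched: "\<And>k. i \<le> k \<Longrightarrow> k < j \<Longrightarrow> ws ! k \<noteq> g \<and> \<not> adj (ws ! k) g"
  shows "g \<in> Fsig F (ss ! i)"
  using \<open>i \<le> j\<close>
proof (induction i rule: inc_induct)
  case base
  show ?case by (fact present)
next
  case (step k)
  with j have k: "k < length ws" by simp
  with walk have "ws ! k \<in> Fsig F (ss ! k)" "ss ! Suc k \<in> set_pmf (rho (ws ! k) (ss ! k))"
    unfolding is_walk_def by auto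
  with intro states k have "Fsig F (ss ! Suc k) \<subseteq> (Fsig F (ss ! k) - {ws ! k}) \<union> Gam F adj (ws ! k)"
    by simp
  with step untouched[of k] show ?case
    unfolding Gam_def by auto
qed

lemma walk_independent_prefix_present:
  assumes intro: "\<forall>\<sigma>\<in>Omega. \<forall>f\<in>Fsig F \<sigma>. \<forall>\<sigma>'\<in>set_pmf (rho f \<sigma>).
           Fsig F \<sigma>' \<subseteq> (Fsig F \<sigma> - {f}) \<union> Gam F adj f"
    and walk: "is_walk F rho ss (V @ U)"
    and states: "\<And>k. k \<le> length (V @ U) \<Longrightarrow> ss ! k \<in> Omega"
    and "distinct V" and "indep adj (set V)"
  shows "set V \<subseteq> Fsig F (hd ss)"
proof
  fix g assume "g \<in> set V"
  then obtain j where j: "j < length V" and g: "g = V ! j"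
    by (auto simp: in_set_conv_nth)
  from walk j have "g \<in> Fsig F (ss ! j)"
    unfolding is_walk_def g by (metis length_append nth_append trans_less_add1)
  moreover have "(V @ U) ! k \<noteq> g \<and> \<not> adj ((V @ U) ! k) g" if "k < j" for k
    using that j g \<open>distinct V\<close> \<open>indep adj (set V)\<close>
    by (auto simp: nth_append nth_eq_iff_index_eq indep_def)
  ultimately have "g \<in> Fsig F (ss ! 0)"
    using walk_flaw_present_earlier[OF intro walk states, of 0 j] j by simp
  moreover from walk have "hd ss = ss ! 0"
    by (cases ss) (auto simp: is_walk_def)
  ultimately show "g \<in> Fsig F (hd ss)" by simp
qed

theorem lemma3:
  fixes Omega :: "'s set" and F :: "'s set set"
    and rho :: "'s set \<Rightarrow> 's \<Rightarrow> 's pmf"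
    and adj :: "'s set \<Rightarrow> 's set \<Rightarrow> bool"
    and p :: "'s set \<Rightarrow> nat"
    and ss :: "'s list" and W :: "'s set list" and Ws :: "'s set list list"
  assumes "finite Omega" and "finite F"
    and "\<forall>f\<in>F. f \<noteq> {} \<and> f \<subseteq> Omega"
    and "\<forall>\<sigma>\<in>Omega. \<forall>f\<in>Fsig F \<sigma>. set_pmf (rho f \<sigma>) \<subseteq> Omega"
    and "\<forall>f\<in>F. \<forall>g\<in>F. adj f g \<longrightarrow> adj g f"
    and "\<forall>\<sigma>\<in>Omega. \<forall>f\<in>Fsig F \<sigma>. \<forall>\<sigma>'\<in>set_pmf (rho f \<sigma>).
           Fsig F \<sigma>' \<subseteq> (Fsig F \<sigma> - {f}) \<union> Gam F adj f"
    and "bij_betw p F {..<card F}"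
    and "hd ss \<in> Omega"
    and "is_walk F rho ss W"
    and "pi_stable_decomp F adj p W Ws"
  shows "set (hd Ws) \<in> Ind adj (Fsig F (hd ss))"
proof -
  from assms(10) obtain V Vs where Ws: "Ws = V # Vs"
    by (cases Ws) (auto simp: pi_stable_decomp_def stable_seq_def)
  from assms(10) have W: "W = V @ concat Vs" and "distinct V" and "indep adj (set V)"
    by (force simp: Ws pi_stable_decomp_def stable_seq_def Ind_def)+
  have "set V \<subseteq> Fsig F (hd ss)"
  proof (rule walk_independent_prefix_present[OF assms(6)])
    show "is_walk F rho ss (V @ concat Vs)" using assms(9) W by simp
    show "ss ! k \<in> Omega" if "k \<le> length (V @ concat Vs)" for k
      using walk_states_in[OF assms(4,8,9)] that W by simp
  qed fact+
  with \<open>indep adj (set V)\<close> show ?thesis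
    by (simp add: Ws Ind_def)
qed

end
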